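(* Let $\Omega\subset\mathbb{R}^d$ be bounded, closed and $\eta$-prox-regular, $W\in C^1(\mathbb{R}^d)$ $\lambda_W$-geodesically convex on $\mathrm{Conv}(\Omega-\Omega)$ and $V\in C^1(\mathbb{R}^d)$ $\lambda_V$-geodesically convex on $\mathrm{Conv}(\Omega)$. Let $\nu^n,\nu\in\mathcal{P}_2(\Omega)$ with $\nu^n\to\nu$ narrowly and $\sup_n\int_\Omega|x|^2d\nu^n<\infty$. Setting $v^n(x)=-\int_\Omega\nabla W(x-y)d\nu^n(y)-\nabla V(x)$ and $v(x)=-\int_\Omega\nabla W(x-y)d\nu(y)-\nabla V(x)$, we have $$\int_\Omega|P_x(v(x))|^2d\nu(x)\le\liminf_{n\to\infty}\int_\Omega|P_x(v^n(x))|^2d\nu^n(x).$$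
   Context: For closed $S$, $P_S(y)$ is the set of nearest points; proximal normal cone $N^P(S,x)=\{v:\exists\alpha>0,\ x\in P_S(x+\alpha v)\}$; $S$ is $\eta$-prox-regular if for every $x\in\partial S$, $v\in N^P(S,x)$, $|v|=1$, the open ball $B_\eta(x+\eta v)$ misses $S$. $T(\Omega,x)$ is the Clarke tangent cone ($v$ such that for all $t_n\searrow0$, $x_n\in\Omega$, $x_n\to x$, there exist $v_n\to v$ with $x_n+t_nv_n\in\Omega$); $P_x(w)$ is its nearest point to $w$. $\mathcal{P}_2(\Omega)$: probability measures with finite second moment. $\lambda$-geodesic convexity on convex $K$: $f(y)\ge f(x)+\langle\nabla f(x),y-x\rangle+\frac\lambda2|y-x|^2$ on $K$. *)

theory Defs
  imports "HOL-Analysis.Analysis" "HOL-Probability.Probability"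
begin

definition nearest_points :: "'a::euclidean_space set \<Rightarrow> 'a \<Rightarrow> 'a set" where
  "nearest_points S y = {x \<in> S. \<forall>z\<in>S. dist y x \<le> dist y z}"

definition prox_normal_cone :: "'a::euclidean_space set \<Rightarrow> 'a \<Rightarrow> 'a set" where
  "prox_normal_cone S x = {v. \<exists>\<alpha>>0. x \<in> nearest_points S (x + \<alpha> *\<^sub>R v)}"

definition prox_regular :: "real \<Rightarrow> 'a::euclidean_space set \<Rightarrow> bool" where
  "prox_regular \<eta> S \<longleftrightarrow>
     (\<forall>x\<in>frontier S. \<forall>v\<in>prox_normal_cone S x. norm v = 1 \<longrightarrow>
        ball (x + \<eta> *\<^sub>R v) \<eta> \<inter> S = {})"

definition clarke_tangent_cone :: "'a::euclidean_space set \<Rightarrow> 'a \<Rightarrow> 'a set" where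
  "clarke_tangent_cone \<Omega> x = {v. \<forall>(t::nat \<Rightarrow> real) (xs::nat \<Rightarrow> 'a).
      (\<forall>n. t n > 0) \<and> t \<longlonglongrightarrow> 0 \<and> (\<forall>n. xs n \<in> \<Omega>) \<and> xs \<longlonglongrightarrow> x \<longrightarrow>
      (\<exists>vs. vs \<longlonglongrightarrow> v \<and> (\<forall>n. xs n + t n *\<^sub>R vs n \<in> \<Omega>))}"

definition tangent_proj :: "'a::euclidean_space set \<Rightarrow> 'a \<Rightarrow> 'a \<Rightarrow> 'a" where
  "tangent_proj \<Omega> x w = closest_point (clarke_tangent_cone \<Omega> x) w"

definition geod_convex_on :: "real \<Rightarrow> 'a::euclidean_space set \<Rightarrow> ('a \<Rightarrow> real) \<Rightarrow> ('a \<Rightarrow> 'a) \<Rightarrow> bool" where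
  "geod_convex_on lam K f g \<longleftrightarrow>
     (\<forall>x\<in>K. \<forall>y\<in>K. f y \<ge> f x + g x \<bullet> (y - x) + lam / 2 * (norm (y - x))\<^sup>2)"

definition C1_with_gradient :: "('a::euclidean_space \<Rightarrow> real) \<Rightarrow> ('a \<Rightarrow> 'a) \<Rightarrow> bool" where
  "C1_with_gradient f g \<longleftrightarrow>
     (\<forall>x. (f has_derivative (\<lambda>h. g x \<bullet> h)) (at x)) \<and> continuous_on UNIV g"

definition P2 :: "'a::euclidean_space set \<Rightarrow> 'a measure set" where
  "P2 \<Omega> = {\<mu>. prob_space \<mu> \<and> sets \<mu> = sets borel \<and> emeasure \<mu> \<Omega> = 1 \<and>
              (\<integral>\<^sup>+ x. ennreal ((norm x)\<^sup>2) \<partial>\<mu>) < \<infinity>}"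

definition narrow_conv :: "(nat \<Rightarrow> 'a::euclidean_space measure) \<Rightarrow> 'a measure \<Rightarrow> bool" where
  "narrow_conv \<nu>s \<nu> \<longleftrightarrow>
     (\<forall>f :: 'a \<Rightarrow> real. continuous_on UNIV f \<and> bounded (range f) \<longrightarrow>
        (\<lambda>n. \<integral>x. f x \<partial>(\<nu>s n)) \<longlonglongrightarrow> (\<integral>x. f x \<partial>\<nu>))"

end

theory Submission
  imports Defs
begin

text \<open>For an \<open>\<eta>\<close>-prox-regular set the proximal normals at \<open>x\<close> are the vectors \<open>q\<close> with
  \<open>q \<bullet> (y - x) \<le> |q| |y - x|\<^sup>2 / (2\<eta>)\<close> on \<open>\<Omega>\<close>. They form a closed convex cone \<open>N(x)\<close> with closed
  graph, and the Clarke tangent cone is its polar. By Moreau's decomposition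
  \<open>P\<^sub>x w = w - proj\<^bsub>N(x)\<^esub> w\<close>, so \<open>|P\<^sub>x w|\<close> is 1-Lipschitz in \<open>w\<close> and lower semicontinuous
  in \<open>(x, w)\<close>. On the compact set \<open>\<Omega>\<close> the fields \<open>v\<^sup>n\<close> converge uniformly to \<open>v\<close>
  (equicontinuity plus narrow convergence), hence \<open>|P\<^sub>x v\<^sup>n(x)|\<^sup>2 \<ge> |P\<^sub>x v(x)|\<^sup>2 - \<epsilon>\<close> eventually,
  uniformly in \<open>x\<close>. Approximating the bounded lower semicontinuous integrand from below by
  increasing Lipschitz inf-convolutions, narrow convergence yields the liminf inequality.\<close>

section \<open>Normal and tangent cones of a prox-regular set\<close>

text \<open>For an \<open>\<eta>\<close>-prox-regular set these are exactly the proximal normals; unlike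
  \<open>prox_normal_cone\<close>, the defining inequality visibly passes to limits.\<close>

definition eta_normal_cone :: "real \<Rightarrow> 'a::euclidean_space set \<Rightarrow> 'a \<Rightarrow> 'a set" where
  "eta_normal_cone \<eta> \<Omega> x = {q. \<forall>y\<in>\<Omega>. q \<bullet> (y - x) \<le> norm q * (norm (y - x))\<^sup>2 / (2 * \<eta>)}"

definition polar_cone :: "'a::real_inner set \<Rightarrow> 'a set" where
  "polar_cone A = {u. \<forall>q\<in>A. q \<bullet> u \<le> 0}"

lemma prox_normal_coneI_quadratic:
  fixes \<Omega> :: "'a::euclidean_space set"
  assumes x: "x \<in> \<Omega>" and C: "C \<ge> 0" and q: "\<And>y. y \<in> \<Omega> \<Longrightarrow> q \<bullet> (y - x) \<le> C * (norm (y - x))\<^sup>2"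
  shows "q \<in> prox_normal_cone \<Omega> x"
proof -
  define s where "s = 1 / (2 * C + 1)"
  have s: "s > 0" "2 * s * C \<le> 1" using C by (auto simp: s_def field_simps)
  have "dist (x + s *\<^sub>R q) x \<le> dist (x + s *\<^sub>R q) y" if y: "y \<in> \<Omega>" for y
  proof -
    have "2 * s * (q \<bullet> (y - x)) \<le> (2 * s * C) * (norm (y - x))\<^sup>2"
      using q[OF y] s by (simp add: mult.assoc)
    also have "\<dots> \<le> (norm (y - x))\<^sup>2" by (rule mult_left_le_one_le) (use s C in auto)
    finally have "(norm (s *\<^sub>R q))\<^sup>2 \<le> (norm (s *\<^sub>R q - (y - x)))\<^sup>2"
      unfolding power2_norm_eq_inner by (simp add: inner_diff_left inner_diff_right inner_commute)
    then have "norm (s *\<^sub>R q) \<le> norm (s *\<^sub>R q - (y - x))"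
      by (rule power2_le_imp_le) simp
    then show ?thesis by (simp add: dist_norm algebra_simps)
  qed
  then have "x \<in> nearest_points \<Omega> (x + s *\<^sub>R q)" using x by (simp add: nearest_points_def)
  then show ?thesis using s by (auto simp: prox_normal_cone_def)
qed

lemma prox_normal_cone_interior:
  assumes x: "x \<in> interior \<Omega>" and q: "q \<in> prox_normal_cone \<Omega> x"
  shows "q = 0"
proof (rule ccontr)
  assume "q \<noteq> 0"
  from q obtain \<alpha> where a: "\<alpha> > 0" and near: "x \<in> nearest_points \<Omega> (x + \<alpha> *\<^sub>R q)"
    by (auto simp: prox_normal_cone_def)
  obtain e where e: "e > 0" "ball x e \<subseteq> \<Omega>" using x by (meson mem_interior)
  define s where "s = min (e / (2 * norm q)) (\<alpha> / 2)"
  have s: "s > 0" "s < \<alpha>" "s * norm q < e" using e a \<open>q \<noteq> 0\<close>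
    by (auto simp: s_def min_def field_simps)
  then have "x + s *\<^sub>R q \<in> \<Omega>" using e by (auto simp: dist_norm)
  then have "\<alpha> * norm q \<le> norm (x + \<alpha> *\<^sub>R q - (x + s *\<^sub>R q))"
    using near a by (auto simp: nearest_points_def dist_norm)
  also have "\<dots> = (\<alpha> - s) * norm q" using s by (simp flip: scaleR_diff_left)
  finally show False using s \<open>q \<noteq> 0\<close> by (simp add: mult_le_cancel_right)
qed

lemma prox_normal_cone_subset_eta_normal_cone:
  fixes \<Omega> :: "'a::euclidean_space set"
  assumes eta: "\<eta> > 0" and pr: "prox_regular \<eta> \<Omega>"
    and x: "x \<in> \<Omega>" and q: "q \<in> prox_normal_cone \<Omega> x"
  shows "q \<in> eta_normal_cone \<eta> \<Omega> x"
proof (cases "q = 0")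
  case True then show ?thesis by (simp add: eta_normal_cone_def)
next
  case False
  from q obtain \<alpha> where a: "\<alpha> > 0" and near: "x \<in> nearest_points \<Omega> (x + \<alpha> *\<^sub>R q)"
    by (auto simp: prox_normal_cone_def)
  have fr: "x \<in> frontier \<Omega>"
    using x closure_subset prox_normal_cone_interior[OF _ q] False by (auto simp: frontier_def)
  define u where "u = q /\<^sub>R norm q"
  have nu: "norm u = 1" using False by (simp add: u_def)
  have "x + (\<alpha> * norm q) *\<^sub>R u = x + \<alpha> *\<^sub>R q" using False by (simp add: u_def)
  then have "u \<in> prox_normal_cone \<Omega> x" using near a False
    unfolding prox_normal_cone_def by (intro CollectI exI[of _ "\<alpha> * norm q"]) simp
  with pr fr nu have emp: "ball (x + \<eta> *\<^sub>R u) \<eta> \<inter> \<Omega> = {}"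
    by (auto simp: prox_regular_def)
  show ?thesis unfolding eta_normal_cone_def
  proof (intro CollectI ballI)
    fix y assume y: "y \<in> \<Omega>"
    then have "y \<notin> ball (x + \<eta> *\<^sub>R u) \<eta>" using emp by blast
    then have "\<eta> \<le> norm (y - x - \<eta> *\<^sub>R u)" by (simp add: dist_commute dist_norm diff_diff_eq)
    then have "\<eta>\<^sup>2 \<le> (norm (y - x - \<eta> *\<^sub>R u))\<^sup>2" using eta by (simp add: power_mono)
    also have "\<dots> = (norm (y - x))\<^sup>2 - 2 * \<eta> * (u \<bullet> (y - x)) + \<eta>\<^sup>2"
      using nu unfolding power2_norm_eq_inner norm_eq_1
      by (simp add: inner_diff_left inner_diff_right inner_commute algebra_simps power2_eq_square)
    finally have "u \<bullet> (y - x) \<le> (norm (y - x))\<^sup>2 / (2 * \<eta>)" using eta by (simp add: field_simps)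
    then have "norm q * (u \<bullet> (y - x)) \<le> norm q * ((norm (y - x))\<^sup>2 / (2 * \<eta>))"
      by (intro mult_left_mono) simp_all
    moreover have "norm q * (u \<bullet> (y - x)) = q \<bullet> (y - x)" using False by (simp add: u_def)
    ultimately show "q \<bullet> (y - x) \<le> norm q * (norm (y - x))\<^sup>2 / (2 * \<eta>)" by simp
  qed
qed

text \<open>Prox-regularity is what makes the normal cone additive: the sum of two \<open>\<eta>\<close>-normals
  satisfies a quadratic bound with a worse constant, hence is a proximal normal, hence an \<open>\<eta>\<close>-normal.\<close>

lemma convex_cone_eta_normal_cone:
  fixes \<Omega> :: "'a::euclidean_space set"
  assumes eta: "\<eta> > 0" and pr: "prox_regular \<eta> \<Omega>" and x: "x \<in> \<Omega>"
  shows "convex_cone (eta_normal_cone \<eta> \<Omega> x)"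
  unfolding convex_cone_iff
proof (intro conjI ballI allI impI)
  show "0 \<in> eta_normal_cone \<eta> \<Omega> x" by (simp add: eta_normal_cone_def)
next
  fix q :: 'a and r :: real assume q: "q \<in> eta_normal_cone \<eta> \<Omega> x" and r: "r \<ge> 0"
  have "r * (q \<bullet> (y - x)) \<le> r * (norm q * (norm (y - x))\<^sup>2 / (2 * \<eta>))" if "y \<in> \<Omega>" for y
    using q r that by (intro mult_left_mono) (auto simp: eta_normal_cone_def)
  then show "r *\<^sub>R q \<in> eta_normal_cone \<eta> \<Omega> x"
    using r by (simp add: eta_normal_cone_def mult.assoc)
next
  fix q1 q2 assume q1: "q1 \<in> eta_normal_cone \<eta> \<Omega> x" and q2: "q2 \<in> eta_normal_cone \<eta> \<Omega> x"
  have "(q1 + q2) \<bullet> (y - x) \<le> (norm q1 + norm q2) / (2 * \<eta>) * (norm (y - x))\<^sup>2" if "y \<in> \<Omega>" for y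
  proof -
    have "q1 \<bullet> (y - x) \<le> norm q1 * (norm (y - x))\<^sup>2 / (2 * \<eta>)"
      and "q2 \<bullet> (y - x) \<le> norm q2 * (norm (y - x))\<^sup>2 / (2 * \<eta>)"
      using q1 q2 that by (auto simp: eta_normal_cone_def)
    then show ?thesis by (simp add: inner_add_left add_divide_distrib algebra_simps)
  qed
  then have "q1 + q2 \<in> prox_normal_cone \<Omega> x"
    using eta by (intro prox_normal_coneI_quadratic[OF x, where C = "(norm q1 + norm q2) / (2 * \<eta>)"]) auto
  then show "q1 + q2 \<in> eta_normal_cone \<eta> \<Omega> x"
    using prox_normal_cone_subset_eta_normal_cone[OF eta pr x] by blast
qed

lemma eta_normal_cone_limit:
  assumes eta: "\<eta> > 0" and xs: "xs \<longlonglongrightarrow> x" and qs: "qs \<longlonglongrightarrow> q"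
    and mem: "\<And>n. qs n \<in> eta_normal_cone \<eta> \<Omega> (xs n)"
  shows "q \<in> eta_normal_cone \<eta> \<Omega> x"
  unfolding eta_normal_cone_def
proof (intro CollectI ballI)
  fix y assume y: "y \<in> \<Omega>"
  have "(\<lambda>n. qs n \<bullet> (y - xs n)) \<longlonglongrightarrow> q \<bullet> (y - x)"
    by (intro tendsto_intros qs xs)
  moreover have "(\<lambda>n. norm (qs n) * (norm (y - xs n))\<^sup>2 / (2 * \<eta>))
      \<longlonglongrightarrow> norm q * (norm (y - x))\<^sup>2 / (2 * \<eta>)"
    by (intro tendsto_intros qs xs) (use eta in simp)
  ultimately show "q \<bullet> (y - x) \<le> norm q * (norm (y - x))\<^sup>2 / (2 * \<eta>)"
    using mem y by (intro LIMSEQ_le) (auto simp: eta_normal_cone_def)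
qed

lemma closed_eta_normal_cone: "\<eta> > 0 \<Longrightarrow> closed (eta_normal_cone \<eta> \<Omega> x)"
  unfolding closed_sequential_limits
  using eta_normal_cone_limit[where xs = "\<lambda>n. x" and x = x] by blast

lemma convex_cone_polar_cone: "convex_cone (polar_cone A)"
  by (auto simp: convex_cone_iff polar_cone_def inner_add_right mult_nonneg_nonpos intro: add_nonpos_nonpos)

lemma closed_polar_cone: "closed (polar_cone A)"
proof -
  have "polar_cone A = (\<Inter>q\<in>A. {u. q \<bullet> u \<le> 0})" by (auto simp: polar_cone_def)
  then show ?thesis by (simp add: closed_INT closed_halfspace_le)
qed

lemma sequentially_imp_neighbourhood:
  fixes x :: "'a::metric_space"
  assumes "\<And>Y. (\<And>n. Y n \<in> S) \<Longrightarrow> Y \<longlonglongrightarrow> x \<Longrightarrow> (\<And>n. \<not> P (Y n)) \<Longrightarrow> False"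
  shows "\<exists>\<delta>>0. \<forall>y\<in>S. dist y x < \<delta> \<longrightarrow> P y"
proof (rule ccontr)
  assume "\<not> ?thesis"
  then have "\<forall>n. \<exists>y. y \<in> S \<and> dist y x < inverse (real (Suc n)) \<and> \<not> P y"
    by (metis inverse_positive_iff_positive of_nat_0_less_iff zero_less_Suc)
  then obtain Y where Y: "\<And>n. Y n \<in> S" "\<And>n. dist (Y n) x < inverse (real (Suc n))" "\<And>n. \<not> P (Y n)"
    by metis
  have "(\<lambda>n. dist (Y n) x) \<longlonglongrightarrow> 0"
  proof (rule tendsto_sandwich[of "\<lambda>n. 0" _ _ "\<lambda>n. inverse (real (Suc n))"])
    show "\<forall>\<^sub>F n in sequentially. dist (Y n) x \<le> inverse (real (Suc n))"
      by (intro always_eventually allI less_imp_le Y(2))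
    show "(\<lambda>n. inverse (real (Suc n))) \<longlonglongrightarrow> 0" by (rule LIMSEQ_inverse_real_of_nat)
  qed simp_all
  then have "Y \<longlonglongrightarrow> x" by (rule tendsto_dist_iff[THEN iffD2])
  then show False by (rule assms[OF Y(1) _ Y(3)])
qed

lemma clarke_tangent_cone_subset_polar:
  fixes \<Omega> :: "'a::euclidean_space set"
  assumes eta: "\<eta> > 0" and x: "x \<in> \<Omega>" and u: "u \<in> clarke_tangent_cone \<Omega> x"
  shows "u \<in> polar_cone (eta_normal_cone \<eta> \<Omega> x)"
  unfolding polar_cone_def
proof (intro CollectI ballI)
  fix q assume q: "q \<in> eta_normal_cone \<eta> \<Omega> x"
  define t where "t = (\<lambda>n. inverse (real (Suc n)))"
  have t0: "t n > 0" for n by (simp add: t_def)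
  have tl: "t \<longlonglongrightarrow> 0" unfolding t_def by (rule LIMSEQ_inverse_real_of_nat)
  have "\<forall>t xs. (\<forall>n. 0 < t n) \<and> t \<longlonglongrightarrow> 0 \<and> (\<forall>n. xs n \<in> \<Omega>) \<and> xs \<longlonglongrightarrow> x \<longrightarrow>
      (\<exists>vs. vs \<longlonglongrightarrow> u \<and> (\<forall>n. xs n + t n *\<^sub>R vs n \<in> \<Omega>))"
    using u by (simp add: clarke_tangent_cone_def)
  from this[rule_format, of t "\<lambda>n. x"] obtain vs
    where vs: "vs \<longlonglongrightarrow> u" and mem: "\<And>n. x + t n *\<^sub>R vs n \<in> \<Omega>"
    using t0 tl x by auto
  have "q \<bullet> vs n \<le> norm q * t n * (norm (vs n))\<^sup>2 / (2 * \<eta>)" for n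
  proof -
    have "t n * (q \<bullet> vs n) \<le> norm q * (t n)\<^sup>2 * (norm (vs n))\<^sup>2 / (2 * \<eta>)"
      using q mem[of n] t0[of n] by (auto simp: eta_normal_cone_def power_mult_distrib)
    also have "\<dots> = t n * (norm q * t n * (norm (vs n))\<^sup>2 / (2 * \<eta>))"
      by (simp add: power2_eq_square)
    finally show ?thesis using t0[of n] by (rule mult_left_le_imp_le)
  qed
  moreover have "(\<lambda>n. norm q * t n * (norm (vs n))\<^sup>2 / (2 * \<eta>)) \<longlonglongrightarrow> norm q * 0 * (norm u)\<^sup>2 / (2 * \<eta>)"
    by (intro tendsto_intros tl vs) (use eta in simp)
  moreover have "(\<lambda>n. q \<bullet> vs n) \<longlonglongrightarrow> q \<bullet> u" by (intro tendsto_intros vs)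
  ultimately show "q \<bullet> u \<le> 0" by (intro LIMSEQ_le) auto
qed

text \<open>A sequence of bad unit normals would have a limit point, which lies in the normal cone at
  \<open>x\<close> because the graph of \<open>eta_normal_cone\<close> is closed.\<close>

lemma polar_eta_normal_cone_near:
  fixes \<Omega> :: "'a::euclidean_space set"
  assumes eta: "\<eta> > 0" and u: "u \<in> polar_cone (eta_normal_cone \<eta> \<Omega> x)" and e: "\<epsilon> > 0"
  shows "\<exists>\<delta>>0. \<forall>p\<in>\<Omega>. dist p x < \<delta> \<longrightarrow> (\<forall>\<nu>\<in>eta_normal_cone \<eta> \<Omega> p. norm \<nu> = 1 \<longrightarrow> \<nu> \<bullet> u < \<epsilon>)"
proof (rule sequentially_imp_neighbourhood)
  fix P assume "P \<longlonglongrightarrow> x"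
    and bad: "\<And>n. \<not> (\<forall>\<nu>\<in>eta_normal_cone \<eta> \<Omega> (P n). norm \<nu> = 1 \<longrightarrow> \<nu> \<bullet> u < \<epsilon>)"
  have "\<forall>n. \<exists>\<nu>. \<nu> \<in> eta_normal_cone \<eta> \<Omega> (P n) \<and> \<nu> \<in> sphere 0 1 \<and> \<nu> \<bullet> u \<ge> \<epsilon>"
    using bad by (auto simp: not_less)
  then obtain N where N: "\<And>n. N n \<in> eta_normal_cone \<eta> \<Omega> (P n)" "\<And>n. N n \<in> sphere 0 1"
    "\<And>n. N n \<bullet> u \<ge> \<epsilon>"
    by metis
  obtain l r where r: "strict_mono r" and lim: "(N \<circ> r) \<longlonglongrightarrow> l"
    using compact_sphere[THEN compact_imp_seq_compact] N(2) by (metis seq_compactE)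
  have "l \<in> eta_normal_cone \<eta> \<Omega> x"
    by (rule eta_normal_cone_limit[OF eta LIMSEQ_subseq_LIMSEQ[OF \<open>P \<longlonglongrightarrow> x\<close> r] lim]) (simp add: N(1))
  then have "l \<bullet> u \<le> 0" using u by (auto simp: polar_cone_def)
  moreover have "(\<lambda>n. (N \<circ> r) n \<bullet> u) \<longlonglongrightarrow> l \<bullet> u" by (intro tendsto_intros lim)
  then have "l \<bullet> u \<ge> \<epsilon>" by (rule LIMSEQ_le_const) (use N(3) in auto)
  ultimately show False using e by simp
qed

lemma dist_closest_point_translate_le:
  fixes \<Omega> :: "'a::euclidean_space set"
  assumes "closed \<Omega>" and "x \<in> \<Omega>"
  shows "dist x (closest_point \<Omega> (x + w)) \<le> 2 * norm w"
proof -
  have "dist (x + w) (closest_point \<Omega> (x + w)) \<le> dist (x + w) x"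
    using assms by (rule closest_point_le)
  then show ?thesis
    using dist_triangle[of x "closest_point \<Omega> (x + w)" "x + w"] by (simp add: dist_norm)
qed

lemma closest_point_translate_tendsto:
  fixes \<Omega> :: "'a::euclidean_space set"
  assumes cl: "closed \<Omega>" and xs: "\<And>n. xs n \<in> \<Omega>" "xs \<longlonglongrightarrow> x" and ws: "ws \<longlonglongrightarrow> 0"
  shows "(\<lambda>n. closest_point \<Omega> (xs n + ws n)) \<longlonglongrightarrow> x"
proof -
  have "(\<lambda>n. 2 * norm (ws n) + dist (xs n) x) \<longlonglongrightarrow> 2 * norm (0::'a) + dist x x"
    by (intro tendsto_intros ws xs)
  then have bound: "(\<lambda>n. 2 * norm (ws n) + dist (xs n) x) \<longlonglongrightarrow> 0" by simp
  have "dist (closest_point \<Omega> (xs n + ws n)) x \<le> 2 * norm (ws n) + dist (xs n) x" for n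
    using dist_triangle[of "closest_point \<Omega> (xs n + ws n)" x "xs n"]
      dist_closest_point_translate_le[OF cl xs(1)[of n], of "ws n"]
    by (simp add: dist_commute)
  then have "(\<lambda>n. dist (closest_point \<Omega> (xs n + ws n)) x) \<longlonglongrightarrow> 0"
    by (intro tendsto_sandwich[OF _ _ tendsto_const bound] always_eventually allI) simp_all
  then show ?thesis by (rule tendsto_dist_iff[THEN iffD2])
qed

text \<open>The unit vector from the projection \<open>p\<close> towards \<open>x + t u\<close> is a proximal normal at \<open>p\<close>,
  so its inner product with \<open>x - p\<close> is at most quadratic in \<open>|x - p| \<le> 2 t |u|\<close>.\<close>

lemma dist_closest_point_translate_small:
  fixes \<Omega> :: "'a::euclidean_space set"
  assumes cl: "closed \<Omega>" and eta: "\<eta> > 0" and pr: "prox_regular \<eta> \<Omega>"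
    and x: "x \<in> \<Omega>" and t: "t > 0" and \<epsilon>: "\<epsilon> \<ge> 0"
    and small: "\<And>\<nu>. \<nu> \<in> eta_normal_cone \<eta> \<Omega> (closest_point \<Omega> (x + t *\<^sub>R u)) \<Longrightarrow> norm \<nu> = 1
      \<Longrightarrow> \<nu> \<bullet> u \<le> \<epsilon>"
  shows "dist (x + t *\<^sub>R u) (closest_point \<Omega> (x + t *\<^sub>R u)) \<le> t * (2 * t * (norm u)\<^sup>2 / \<eta> + \<epsilon>)"
proof -
  define z where "z = x + t *\<^sub>R u"
  define p where "p = closest_point \<Omega> z"
  define d where "d = dist z p"
  have ne: "\<Omega> \<noteq> {}" using x by auto
  have p: "p \<in> \<Omega>" "p \<in> nearest_points \<Omega> z"
    using closest_point_exists[OF cl ne] by (auto simp: p_def nearest_points_def)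
  have xp: "norm (x - p) \<le> 2 * t * norm u"
    using dist_closest_point_translate_le[OF cl x, of "t *\<^sub>R u"] t by (simp add: p_def z_def dist_norm)
  have "d \<le> (norm (x - p))\<^sup>2 / (2 * \<eta>) + t * \<epsilon>"
  proof (cases "d = 0")
    case True then show ?thesis using t \<epsilon> eta by simp
  next
    case False
    then have d: "d > 0" by (simp add: d_def)
    define \<nu> where "\<nu> = (z - p) /\<^sub>R d"
    have "norm \<nu> = 1" using d by (simp add: \<nu>_def d_def dist_norm)
    have "p + d *\<^sub>R \<nu> = z" using d by (simp add: \<nu>_def)
    then have "\<nu> \<in> prox_normal_cone \<Omega> p"
      using p(2) d unfolding prox_normal_cone_def by (intro CollectI exI[of _ d]) simp
    then have \<nu>: "\<nu> \<in> eta_normal_cone \<eta> \<Omega> p"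
      by (rule prox_normal_cone_subset_eta_normal_cone[OF eta pr p(1)])
    have "d = \<nu> \<bullet> (z - p)"
      using d by (simp add: \<nu>_def d_def dist_norm power2_eq_square flip: power2_norm_eq_inner)
    also have "\<dots> = \<nu> \<bullet> (x - p) + t * (\<nu> \<bullet> u)"
      by (simp add: z_def inner_diff_right inner_add_right algebra_simps)
    also have "\<nu> \<bullet> (x - p) \<le> (norm (x - p))\<^sup>2 / (2 * \<eta>)"
      using \<nu> x \<open>norm \<nu> = 1\<close> by (auto simp: eta_normal_cone_def)
    also have "t * (\<nu> \<bullet> u) \<le> t * \<epsilon>"
      using small \<nu> \<open>norm \<nu> = 1\<close> t by (simp add: p_def z_def)
    finally show ?thesis by simp
  qed
  also have "(norm (x - p))\<^sup>2 / (2 * \<eta>) \<le> (2 * t * norm u)\<^sup>2 / (2 * \<eta>)"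
    using xp eta by (intro divide_right_mono power_mono) auto
  also have "(2 * t * norm u)\<^sup>2 / (2 * \<eta>) + t * \<epsilon> = t * (2 * t * (norm u)\<^sup>2 / \<eta> + \<epsilon>)"
    using eta by (simp add: power2_eq_square field_simps)
  finally show ?thesis by (simp add: d_def z_def p_def)
qed

lemma dist_closest_point_difference_quotient_le:
  fixes \<Omega> :: "'a::euclidean_space set"
  assumes "closed \<Omega>" and "\<eta> > 0" and "prox_regular \<eta> \<Omega>"
    and "x \<in> \<Omega>" and t: "t > 0" and "\<epsilon> \<ge> 0"
    and "\<And>\<nu>. \<nu> \<in> eta_normal_cone \<eta> \<Omega> (closest_point \<Omega> (x + t *\<^sub>R u)) \<Longrightarrow> norm \<nu> = 1
      \<Longrightarrow> \<nu> \<bullet> u \<le> \<epsilon>"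
  shows "dist ((closest_point \<Omega> (x + t *\<^sub>R u) - x) /\<^sub>R t) u \<le> 2 * t * (norm u)\<^sup>2 / \<eta> + \<epsilon>"
proof -
  let ?p = "closest_point \<Omega> (x + t *\<^sub>R u)"
  have "(?p - x) /\<^sub>R t - u = (?p - (x + t *\<^sub>R u)) /\<^sub>R t"
    using t by (simp add: algebra_simps)
  then have "dist ((?p - x) /\<^sub>R t) u = dist (x + t *\<^sub>R u) ?p / t"
    using t by (simp add: dist_norm norm_minus_commute divide_inverse mult.commute)
  then show ?thesis
    using dist_closest_point_translate_small[OF assms] t by (simp add: divide_le_eq mult.commute)
qed

lemma polar_subset_clarke_tangent_cone:
  fixes \<Omega> :: "'a::euclidean_space set"
  assumes cl: "closed \<Omega>" and eta: "\<eta> > 0" and pr: "prox_regular \<eta> \<Omega>"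
    and x: "x \<in> \<Omega>" and u: "u \<in> polar_cone (eta_normal_cone \<eta> \<Omega> x)"
  shows "u \<in> clarke_tangent_cone \<Omega> x"
  unfolding clarke_tangent_cone_def
proof (intro CollectI allI impI)
  fix t :: "nat \<Rightarrow> real" and xs :: "nat \<Rightarrow> 'a"
  assume "(\<forall>n. 0 < t n) \<and> t \<longlonglongrightarrow> 0 \<and> (\<forall>n. xs n \<in> \<Omega>) \<and> xs \<longlonglongrightarrow> x"
  then have t: "\<And>n. t n > 0" "t \<longlonglongrightarrow> 0" and xs: "\<And>n. xs n \<in> \<Omega>" "xs \<longlonglongrightarrow> x" by auto
  define p where "p n = closest_point \<Omega> (xs n + t n *\<^sub>R u)" for n
  define vs where "vs n = (p n - xs n) /\<^sub>R t n" for n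
  have "\<Omega> \<noteq> {}" using x by auto
  then have p\<Omega>: "p n \<in> \<Omega>" for n using closest_point_in_set[OF cl] by (simp add: p_def)
  have "(\<lambda>n. t n *\<^sub>R u) \<longlonglongrightarrow> 0" using tendsto_scaleR[OF t(2) tendsto_const[of u]] by simp
  then have p: "p \<longlonglongrightarrow> x" unfolding p_def by (rule closest_point_translate_tendsto[OF cl xs])
  have "vs \<longlonglongrightarrow> u"
  proof (rule tendsto_iff[THEN iffD2], intro allI impI)
    fix e :: real assume e: "e > 0"
    obtain \<delta> where "\<delta> > 0" and near: "\<And>p. p \<in> \<Omega> \<Longrightarrow> dist p x < \<delta>
        \<Longrightarrow> \<forall>\<nu>\<in>eta_normal_cone \<eta> \<Omega> p. norm \<nu> = 1 \<longrightarrow> \<nu> \<bullet> u < e / 2"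
      using polar_eta_normal_cone_near[OF eta u, of "e / 2"] e by auto
    have "(\<lambda>n. 2 * t n * (norm u)\<^sup>2 / \<eta>) \<longlonglongrightarrow> 2 * 0 * (norm u)\<^sup>2 / \<eta>"
      by (intro tendsto_intros t) (use eta in simp)
    then have "\<forall>\<^sub>F n in sequentially. 2 * t n * (norm u)\<^sup>2 / \<eta> < e / 2"
      using e by (intro order_tendstoD(2)) auto
    moreover have "\<forall>\<^sub>F n in sequentially. dist (p n) x < \<delta>"
      using p \<open>\<delta> > 0\<close> by (rule tendstoD)
    ultimately show "\<forall>\<^sub>F n in sequentially. dist (vs n) u < e"
    proof eventually_elim
      case (elim n)
      have "dist (vs n) u \<le> 2 * t n * (norm u)\<^sup>2 / \<eta> + e / 2"
        unfolding vs_def p_def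
        by (rule dist_closest_point_difference_quotient_le[OF cl eta pr xs(1) t(1)])
           (use e near[OF p\<Omega>[of n] elim(2)] in \<open>auto simp: p_def\<close>)
      then show ?case using elim(1) by linarith
    qed
  qed
  moreover have "xs n + t n *\<^sub>R vs n \<in> \<Omega>" for n using t(1)[of n] p\<Omega> by (simp add: vs_def)
  ultimately show "\<exists>vs. vs \<longlonglongrightarrow> u \<and> (\<forall>n. xs n + t n *\<^sub>R vs n \<in> \<Omega>)" by blast
qed

lemma clarke_tangent_cone_eq_polar:
  fixes \<Omega> :: "'a::euclidean_space set"
  assumes "closed \<Omega>" and "\<eta> > 0" and "prox_regular \<eta> \<Omega>" and "x \<in> \<Omega>"
  shows "clarke_tangent_cone \<Omega> x = polar_cone (eta_normal_cone \<eta> \<Omega> x)"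
  using clarke_tangent_cone_subset_polar[OF assms(2,4)] polar_subset_clarke_tangent_cone[OF assms]
  by blast

lemma closest_point_polar_cone:
  fixes N :: "'a::euclidean_space set"
  assumes N: "convex_cone N" and cl: "closed N"
  shows "closest_point (polar_cone N) w = w - closest_point N w"
proof -
  define c where "c = closest_point N w"
  have c: "c \<in> N" using closest_point_in_set[OF cl convex_cone_nonempty[OF N]] by (simp add: c_def)
  have obtuse: "(w - c) \<bullet> (y - c) \<le> 0" if "y \<in> N" for y
    using closest_point_dot[OF _ cl that] N by (simp add: c_def convex_cone_def)
  have "(w - c) \<bullet> (0 - c) \<le> 0" and "(w - c) \<bullet> (2 *\<^sub>R c - c) \<le> 0"
    using obtuse[OF convex_cone_contains_0[OF N]] obtuse[OF convex_cone_scaleR[OF N _ c, of 2]] by auto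
  then have orth: "c \<bullet> (w - c) = 0" by (simp add: inner_commute inner_diff_right algebra_simps)
  have polar: "w - c \<in> polar_cone N"
    unfolding polar_cone_def
  proof (intro CollectI ballI)
    fix q assume "q \<in> N"
    then show "q \<bullet> (w - c) \<le> 0"
      using obtuse[OF convex_cone_add[OF N _ c]] by (simp add: inner_commute)
  qed
  have "dist w (w - c) \<le> dist w z" if z: "z \<in> polar_cone N" for z
  proof -
    have "c \<bullet> z \<le> 0" using z c by (auto simp: polar_cone_def)
    then have "(norm c)\<^sup>2 \<le> c \<bullet> (w - z)"
      using orth by (simp add: power2_norm_eq_inner inner_diff_right)
    also have "\<dots> \<le> norm c * norm (w - z)" by (rule norm_cauchy_schwarz)
    finally have "norm c \<le> norm (w - z)"
      by (cases "c = 0") (auto simp: power2_eq_square mult_le_cancel_left)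
    then show ?thesis by (simp add: dist_norm)
  qed
  moreover have "convex (polar_cone N)" using convex_cone_polar_cone[of N] by (simp add: convex_cone_def)
  ultimately show ?thesis unfolding c_def
    by (intro closest_point_unique[symmetric] closed_polar_cone polar[unfolded c_def] ballI) (simp_all add: c_def)
qed

lemma tangent_proj_eq:
  fixes \<Omega> :: "'a::euclidean_space set"
  assumes "closed \<Omega>" and "\<eta> > 0" and "prox_regular \<eta> \<Omega>" and "x \<in> \<Omega>"
  shows "tangent_proj \<Omega> x w = w - closest_point (eta_normal_cone \<eta> \<Omega> x) w"
  unfolding tangent_proj_def clarke_tangent_cone_eq_polar[OF assms]
  using assms by (intro closest_point_polar_cone convex_cone_eta_normal_cone closed_eta_normal_cone)

lemma norm_tangent_proj_le:
  fixes \<Omega> :: "'a::euclidean_space set"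
  assumes "closed \<Omega>" and "\<eta> > 0" and "prox_regular \<eta> \<Omega>" and "x \<in> \<Omega>"
    and "q \<in> eta_normal_cone \<eta> \<Omega> x"
  shows "norm (tangent_proj \<Omega> x w) \<le> norm (w - q)"
  using closest_point_le[OF closed_eta_normal_cone[OF assms(2)] assms(5), of w]
  by (simp add: tangent_proj_eq[OF assms(1-4)] dist_norm)

lemma dist_tangent_proj_le:
  fixes \<Omega> :: "'a::euclidean_space set"
  assumes "closed \<Omega>" and "\<eta> > 0" and "prox_regular \<eta> \<Omega>" and "x \<in> \<Omega>"
  shows "dist (tangent_proj \<Omega> x w) (tangent_proj \<Omega> x w') \<le> dist w w'"
  unfolding tangent_proj_def clarke_tangent_cone_eq_polar[OF assms]
  using convex_cone_polar_cone[of "eta_normal_cone \<eta> \<Omega> x"]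
  by (intro closest_point_lipschitz closed_polar_cone) (auto simp: convex_cone_def)

text \<open>Along a sequence violating the claim, the normal components of \<open>v\<close> stay bounded and
  subconverge to a normal at \<open>x\<close> that is closer to \<open>v x\<close> than \<open>tangent_proj\<close> allows.\<close>

lemma norm_tangent_proj_lower_semicontinuous:
  fixes \<Omega> :: "'a::euclidean_space set" and v :: "'a \<Rightarrow> 'a"
  assumes cl: "closed \<Omega>" and eta: "\<eta> > 0" and pr: "prox_regular \<eta> \<Omega>"
    and v: "continuous_on \<Omega> v" and x: "x \<in> \<Omega>" and e: "e > 0"
  shows "\<exists>\<delta>>0. \<forall>y\<in>\<Omega>. dist y x < \<delta> \<longrightarrow>
    norm (tangent_proj \<Omega> x (v x)) - e < norm (tangent_proj \<Omega> y (v y))"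
proof (rule sequentially_imp_neighbourhood)
  fix Y assume Y\<Omega>: "\<And>n. Y n \<in> \<Omega>" and Y: "Y \<longlonglongrightarrow> x"
    and small: "\<And>n. \<not> norm (tangent_proj \<Omega> x (v x)) - e < norm (tangent_proj \<Omega> (Y n) (v (Y n)))"
  define c where "c n = closest_point (eta_normal_cone \<eta> \<Omega> (Y n)) (v (Y n))" for n
  have c: "c n \<in> eta_normal_cone \<eta> \<Omega> (Y n)" for n
    unfolding c_def using convex_cone_eta_normal_cone[OF eta pr Y\<Omega>]
    by (intro closest_point_in_set closed_eta_normal_cone eta convex_cone_nonempty)
  have vY: "(\<lambda>n. v (Y n)) \<longlonglongrightarrow> v x"
    using continuous_on_tendsto_compose[OF v Y x] Y\<Omega> by simp
  then obtain B where B: "\<And>n. norm (v (Y n)) \<le> B"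
    by (metis BseqE convergent_imp_Bseq convergentI less_imp_le)
  have "c n \<in> cball 0 (2 * B)" for n
  proof -
    have "dist (v (Y n)) (c n) \<le> dist (v (Y n)) 0"
      unfolding c_def using convex_cone_contains_0[OF convex_cone_eta_normal_cone[OF eta pr Y\<Omega>]]
      by (intro closest_point_le closed_eta_normal_cone eta)
    then show ?thesis
      using norm_triangle_ineq2[of "c n" "v (Y n)"] B[of n] by (simp add: dist_norm norm_minus_commute)
  qed
  then obtain l r where r: "strict_mono r" and lim: "(c \<circ> r) \<longlonglongrightarrow> l"
    using compact_cball[THEN compact_imp_seq_compact] by (metis seq_compactE)
  have l: "l \<in> eta_normal_cone \<eta> \<Omega> x"
    using eta_normal_cone_limit[OF eta LIMSEQ_subseq_LIMSEQ[OF Y r] lim] c by simp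
  have "(\<lambda>n. norm (v (Y (r n)) - c (r n))) \<longlonglongrightarrow> norm (v x - l)"
    using lim LIMSEQ_subseq_LIMSEQ[OF vY r] by (intro tendsto_intros) (simp_all add: o_def)
  moreover have "norm (v (Y (r n)) - c (r n)) \<le> norm (tangent_proj \<Omega> x (v x)) - e" for n
    using small[of "r n"] tangent_proj_eq[OF cl eta pr Y\<Omega>] by (simp add: c_def)
  ultimately have "norm (v x - l) \<le> norm (tangent_proj \<Omega> x (v x)) - e"
    by (intro LIMSEQ_le_const2) auto
  moreover have "norm (tangent_proj \<Omega> x (v x)) \<le> norm (v x - l)"
    by (rule norm_tangent_proj_le[OF cl eta pr x l])
  ultimately show False using e by simp
qed

section \<open>Measures in \<open>P2\<close> and narrow convergence\<close>

lemma P2_D: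
  assumes "\<mu> \<in> P2 \<Omega>"
  shows "prob_space \<mu>" and "sets \<mu> = sets borel" and "\<Omega> \<in> sets \<mu>" and "AE x in \<mu>. x \<in> \<Omega>"
    and "\<Omega> \<noteq> {}"
proof -
  show ps: "prob_space \<mu>" and "sets \<mu> = sets borel" using assms by (auto simp: P2_def)
  have "emeasure \<mu> \<Omega> = 1" using assms by (simp add: P2_def)
  then show "\<Omega> \<in> sets \<mu>" by (metis emeasure_notin_sets zero_neq_one)
  then show "AE x in \<mu>. x \<in> \<Omega>"
    using \<open>emeasure \<mu> \<Omega> = 1\<close> prob_space.AE_prob_1[OF ps] by (simp add: measure_def)
  show "\<Omega> \<noteq> {}" using \<open>emeasure \<mu> \<Omega> = 1\<close> by auto
qed

lemma borel_measurable_P2: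
  "\<mu> \<in> P2 \<Omega> \<Longrightarrow> f \<in> borel_measurable borel \<Longrightarrow> f \<in> borel_measurable \<mu>"
  using measurable_cong_sets[OF P2_D(2) refl] by blast

lemma set_nn_integral_P2_eq_integral:
  fixes \<phi> :: "'a::euclidean_space \<Rightarrow> real"
  assumes \<mu>: "\<mu> \<in> P2 \<Omega>" and \<phi>: "\<phi> \<in> borel_measurable borel" and "\<And>x. 0 \<le> \<phi> x" "\<And>x. \<phi> x \<le> B"
  shows "(\<integral>\<^sup>+ x\<in>\<Omega>. ennreal (\<phi> x) \<partial>\<mu>) = ennreal (\<integral> x. \<phi> x \<partial>\<mu>)"
proof -
  have "integrable \<mu> \<phi>"
    using P2_D(1)[OF \<mu>] borel_measurable_P2[OF \<mu> \<phi>] assms(3,4)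
    by (intro finite_measure.integrable_const_bound[of _ _ B]) (auto simp: prob_space_def)
  moreover have "(\<integral>\<^sup>+ x\<in>\<Omega>. ennreal (\<phi> x) \<partial>\<mu>) = (\<integral>\<^sup>+ x. ennreal (\<phi> x) \<partial>\<mu>)"
    using P2_D(4)[OF \<mu>] by (intro nn_integral_cong_AE) auto
  ultimately show ?thesis using assms(3) by (simp add: nn_integral_eq_integral)
qed

lemma set_integrable_P2_bounded:
  fixes g :: "'a::euclidean_space \<Rightarrow> 'b::euclidean_space"
  assumes \<mu>: "\<mu> \<in> P2 \<Omega>" and g: "g \<in> borel_measurable borel" and B: "\<And>y. y \<in> \<Omega> \<Longrightarrow> norm (g y) \<le> B"
  shows "set_integrable \<mu> \<Omega> g" and "norm (LINT y:\<Omega>|\<mu>. g y) \<le> B"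
proof -
  note \<mu>D = P2_D[OF \<mu>]
  have bound: "AE y in \<mu>. norm (indicator \<Omega> y *\<^sub>R g y) \<le> B"
    using \<mu>D(4) by eventually_elim (simp add: B)
  have "(\<lambda>y. indicator \<Omega> y *\<^sub>R g y) \<in> borel_measurable \<mu>"
    using \<mu>D(3) borel_measurable_P2[OF \<mu> g] by measurable
  then have int: "integrable \<mu> (\<lambda>y. indicator \<Omega> y *\<^sub>R g y)"
    using \<mu>D(1) bound by (intro finite_measure.integrable_const_bound) (auto simp: prob_space_def)
  then show "set_integrable \<mu> \<Omega> g" by (simp add: set_integrable_def)
  have "norm (LINT y:\<Omega>|\<mu>. g y) \<le> (\<integral>y. norm (indicator \<Omega> y *\<^sub>R g y) \<partial>\<mu>)"
    unfolding set_lebesgue_integral_def by (rule integral_norm_bound)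
  also have "\<dots> \<le> (\<integral>y. B \<partial>\<mu>)"
    using \<mu>D(1) by (intro integral_mono_AE integrable_norm int bound)
       (simp add: prob_space_def finite_measure.integrable_const)
  also have "\<dots> = B" using prob_space.prob_space[OF \<mu>D(1)] by simp
  finally show "norm (LINT y:\<Omega>|\<mu>. g y) \<le> B" .
qed

text \<open>Each coordinate of \<open>g\<close> is clipped to a bounded continuous test function that agrees
  with it on \<open>\<Omega>\<close>, where all the measures live.\<close>

lemma narrow_conv_set_integral:
  fixes g :: "'a::euclidean_space \<Rightarrow> 'b::euclidean_space"
  assumes \<nu>s: "\<And>n. \<nu>s n \<in> P2 \<Omega>" and \<nu>: "\<nu> \<in> P2 \<Omega>" and conv: "narrow_conv \<nu>s \<nu>"
    and g: "continuous_on UNIV g" and B: "\<And>y. y \<in> \<Omega> \<Longrightarrow> norm (g y) \<le> B"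
  shows "(\<lambda>n. LINT y:\<Omega>|\<nu>s n. g y) \<longlonglongrightarrow> (LINT y:\<Omega>|\<nu>. g y)"
proof -
  have g_meas: "g \<in> borel_measurable borel" using g by (rule borel_measurable_continuous_onI)
  have "(\<lambda>n. (LINT y:\<Omega>|\<nu>s n. g y) \<bullet> b) \<longlonglongrightarrow> (LINT y:\<Omega>|\<nu>. g y) \<bullet> b" if b: "b \<in> Basis" for b
  proof -
    define \<phi> where "\<phi> y = max (- B) (min B (g y \<bullet> b))" for y
    have \<phi>: "continuous_on UNIV \<phi>" unfolding \<phi>_def by (intro continuous_intros g)
    have "(LINT y:\<Omega>|\<mu>. g y) \<bullet> b = (\<integral>y. \<phi> y \<partial>\<mu>)" if \<mu>: "\<mu> \<in> P2 \<Omega>" for \<mu>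
    proof -
      have "(LINT y:\<Omega>|\<mu>. g y) \<bullet> b = (\<integral>y. (indicator \<Omega> y *\<^sub>R g y) \<bullet> b \<partial>\<mu>)"
        using set_integrable_P2_bounded(1)[OF \<mu> g_meas B]
        unfolding set_lebesgue_integral_def set_integrable_def by (rule integral_inner_left[symmetric])
      also have "\<dots> = (\<integral>y. \<phi> y \<partial>\<mu>)"
      proof (rule integral_cong_AE)
        show "(\<lambda>y. (indicator \<Omega> y *\<^sub>R g y) \<bullet> b) \<in> borel_measurable \<mu>"
          using P2_D(3)[OF \<mu>] borel_measurable_P2[OF \<mu> g_meas] by measurable
        show "\<phi> \<in> borel_measurable \<mu>" by (rule borel_measurable_P2[OF \<mu> borel_measurable_continuous_onI[OF \<phi>]])
        show "AE y in \<mu>. (indicator \<Omega> y *\<^sub>R g y) \<bullet> b = \<phi> y"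
          using P2_D(4)[OF \<mu>]
        proof eventually_elim
          case (elim y)
          have "\<bar>g y \<bullet> b\<bar> \<le> B" using Basis_le_norm[OF b, of "g y"] B[OF elim] by linarith
          then show ?case using elim by (auto simp: \<phi>_def)
        qed
      qed
      finally show ?thesis .
    qed
    moreover have "bounded (range \<phi>)"
      unfolding bounded_iff by (intro exI[of _ "\<bar>B\<bar>"]) (auto simp: \<phi>_def)
    then have "(\<lambda>n. \<integral>y. \<phi> y \<partial>\<nu>s n) \<longlonglongrightarrow> (\<integral>y. \<phi> y \<partial>\<nu>)"
      using conv \<phi> unfolding narrow_conv_def by blast
    ultimately show ?thesis using \<nu>s \<nu> by simp
  qed
  then have "(\<lambda>n. \<Sum>b\<in>Basis. ((LINT y:\<Omega>|\<nu>s n. g y) \<bullet> b) *\<^sub>R b) \<longlonglongrightarrow> (\<Sum>b\<in>Basis. ((LINT y:\<Omega>|\<nu>. g y) \<bullet> b) *\<^sub>R b)"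
    by (intro tendsto_sum tendsto_scaleR tendsto_const)
  then show ?thesis by (simp add: euclidean_representation)
qed

section \<open>Lower semicontinuity of integrals under narrow convergence\<close>

text \<open>For \<open>k \<rightarrow> \<infinity>\<close> these \<open>k\<close>-Lipschitz minorants increase to a lower semicontinuous \<open>F\<close> on \<open>\<Omega>\<close>.\<close>

definition truncated_inf_convolution :: "('a::metric_space \<Rightarrow> real) \<Rightarrow> 'a set \<Rightarrow> real \<Rightarrow> real \<Rightarrow> 'a \<Rightarrow> real" where
  "truncated_inf_convolution F \<Omega> M k x = min M (INF y\<in>\<Omega>. F y + k * dist x y)"

lemma lipschitz_on_inf_convolution:
  fixes F :: "'a::metric_space \<Rightarrow> real"
  assumes ne: "\<Omega> \<noteq> {}" and F0: "\<And>x. x \<in> \<Omega> \<Longrightarrow> 0 \<le> F x" and k: "0 \<le> k"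
  shows "k-lipschitz_on UNIV (\<lambda>x. INF y\<in>\<Omega>. F y + k * dist x y)"
proof -
  let ?\<Phi> = "\<lambda>x. INF y\<in>\<Omega>. F y + k * dist x y"
  have bdd: "bdd_below ((\<lambda>y. F y + k * dist x y) ` \<Omega>)" for x
    by (rule bdd_belowI2[where m = 0]) (use F0 k in auto)
  have lip: "?\<Phi> x - k * dist x x' \<le> ?\<Phi> x'" for x x'
  proof (rule cINF_greatest[OF ne])
    fix y assume y: "y \<in> \<Omega>"
    have "?\<Phi> x \<le> F y + k * dist x y" by (rule cINF_lower[OF bdd y])
    also have "\<dots> \<le> F y + k * dist x' y + k * dist x x'"
      using mult_left_mono[OF dist_triangle[of x y x'] k] by (simp add: distrib_left)
    finally show "?\<Phi> x - k * dist x x' \<le> F y + k * dist x' y" by simp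
  qed
  show ?thesis
  proof (rule lipschitz_onI[OF _ k])
    fix x x' :: 'a
    show "dist (?\<Phi> x) (?\<Phi> x') \<le> k * dist x x'"
      using lip[of x x'] lip[of x' x] by (simp add: dist_real_def dist_commute abs_le_iff)
  qed
qed

lemma truncated_inf_convolution_properties:
  fixes F :: "'a::metric_space \<Rightarrow> real"
  assumes ne: "\<Omega> \<noteq> {}" and F0: "\<And>x. x \<in> \<Omega> \<Longrightarrow> 0 \<le> F x" and M: "0 \<le> M" and k: "0 \<le> k"
  shows continuous_on_truncated_inf_convolution: "continuous_on UNIV (truncated_inf_convolution F \<Omega> M k)"
    and truncated_inf_convolution_nonneg: "\<And>x. 0 \<le> truncated_inf_convolution F \<Omega> M k x"
    and truncated_inf_convolution_le_bound: "\<And>x. truncated_inf_convolution F \<Omega> M k x \<le> M"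
    and truncated_inf_convolution_le: "\<And>x. x \<in> \<Omega> \<Longrightarrow> truncated_inf_convolution F \<Omega> M k x \<le> F x"
    and truncated_inf_convolution_mono:
      "\<And>x k'. k \<le> k' \<Longrightarrow> truncated_inf_convolution F \<Omega> M k x \<le> truncated_inf_convolution F \<Omega> M k' x"
proof -
  have bdd: "bdd_below ((\<lambda>y. F y + k * dist x y) ` \<Omega>)" for x
    by (rule bdd_belowI2[where m = 0]) (use F0 k in auto)
  have "continuous_on UNIV (\<lambda>x. INF y\<in>\<Omega>. F y + k * dist x y)"
    by (rule lipschitz_on_continuous_on[OF lipschitz_on_inf_convolution[OF ne F0 k]])
  then show "continuous_on UNIV (truncated_inf_convolution F \<Omega> M k)"
    unfolding truncated_inf_convolution_def by (intro continuous_intros)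
  show "0 \<le> truncated_inf_convolution F \<Omega> M k x" for x
    unfolding truncated_inf_convolution_def using F0 M k by (auto intro: cINF_greatest[OF ne])
  show "truncated_inf_convolution F \<Omega> M k x \<le> M" for x
    by (simp add: truncated_inf_convolution_def)
  show "truncated_inf_convolution F \<Omega> M k x \<le> F x" if "x \<in> \<Omega>" for x
    using cINF_lower[OF bdd[of x] that] by (simp add: truncated_inf_convolution_def min.coboundedI2)
  show "truncated_inf_convolution F \<Omega> M k x \<le> truncated_inf_convolution F \<Omega> M k' x"
    if "k \<le> k'" for x k'
  proof -
    have "(INF y\<in>\<Omega>. F y + k * dist x y) \<le> (INF y\<in>\<Omega>. F y + k' * dist x y)"
      using that by (intro cINF_mono[OF ne bdd]) (auto intro!: bexI mult_right_mono)
    then show ?thesis by (auto simp: truncated_inf_convolution_def)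
  qed
qed

lemma truncated_inf_convolution_approx:
  fixes F :: "'a::metric_space \<Rightarrow> real"
  assumes ne: "\<Omega> \<noteq> {}" and F0: "\<And>x. x \<in> \<Omega> \<Longrightarrow> 0 \<le> F x" and FM: "\<And>x. x \<in> \<Omega> \<Longrightarrow> F x \<le> M"
    and lsc: "\<And>x e. x \<in> \<Omega> \<Longrightarrow> e > 0 \<Longrightarrow> \<exists>\<delta>>0. \<forall>y\<in>\<Omega>. dist y x < \<delta> \<longrightarrow> F x - e \<le> F y"
    and x: "x \<in> \<Omega>" and e: "e > 0"
  shows "\<exists>k::nat. F x - e \<le> truncated_inf_convolution F \<Omega> M (real k) x"
proof -
  obtain \<delta> where d: "\<delta> > 0" and D: "\<And>y. y \<in> \<Omega> \<Longrightarrow> dist y x < \<delta> \<Longrightarrow> F x - e \<le> F y"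
    using lsc[OF x e] by blast
  have M0: "0 \<le> M" using F0[OF x] FM[OF x] by simp
  obtain k :: nat where k: "M / \<delta> < real k" using reals_Archimedean2 by blast
  have bdd: "bdd_below ((\<lambda>y. F y + real k * dist x y) ` \<Omega>)"
    by (rule bdd_belowI2[where m=0]) (use F0 in auto)
  have "F x - e \<le> (INF y\<in>\<Omega>. F y + real k * dist x y)"
  proof (rule cINF_greatest[OF ne])
    fix y assume y: "y \<in> \<Omega>"
    show "F x - e \<le> F y + real k * dist x y"
    proof (cases "dist y x < \<delta>")
      case True
      then show ?thesis using D[OF y] by (simp add: add_increasing2)
    next
      case False
      then have "\<delta> \<le> dist x y" by (simp add: dist_commute)
      moreover have "M < real k * \<delta>" using k d by (simp add: field_simps)
      ultimately have "M \<le> real k * dist x y"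
        by (smt (verit) mult_left_mono of_nat_0_le_iff)
      then show ?thesis using FM[OF x] F0[OF y] e by linarith
    qed
  qed
  moreover have "F x - e \<le> M" using FM[OF x] e by simp
  ultimately show ?thesis by (auto simp: truncated_inf_convolution_def)
qed

lemma set_nn_integral_le_SUP_truncated_inf_convolution:
  fixes F :: "'a::euclidean_space \<Rightarrow> real"
  assumes \<nu>: "\<nu> \<in> P2 \<Omega>" and F0: "\<And>x. x \<in> \<Omega> \<Longrightarrow> 0 \<le> F x" and FM: "\<And>x. x \<in> \<Omega> \<Longrightarrow> F x \<le> M"
    and lsc: "\<And>x e. x \<in> \<Omega> \<Longrightarrow> e > 0 \<Longrightarrow> \<exists>\<delta>>0. \<forall>y\<in>\<Omega>. dist y x < \<delta> \<longrightarrow> F x - e \<le> F y"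
  shows "(\<integral>\<^sup>+ x\<in>\<Omega>. ennreal (F x) \<partial>\<nu>)
    \<le> (SUP k::nat. \<integral>\<^sup>+ x\<in>\<Omega>. ennreal (truncated_inf_convolution F \<Omega> M (real k) x) \<partial>\<nu>)"
proof -
  let ?F = "\<lambda>k::nat. truncated_inf_convolution F \<Omega> M (real k)"
  have ne: "\<Omega> \<noteq> {}" by (rule P2_D(5)[OF \<nu>])
  then obtain x0 where "x0 \<in> \<Omega>" by blast
  then have M: "0 \<le> M" using F0 FM by force
  have "(\<integral>\<^sup>+ x\<in>\<Omega>. ennreal (F x) \<partial>\<nu>) \<le> (\<integral>\<^sup>+ x. (SUP k. ennreal (?F k x) * indicator \<Omega> x) \<partial>\<nu>)"
  proof (intro nn_integral_mono)
    fix x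
    have "ennreal (F x) \<le> (SUP k. ennreal (?F k x))" if x: "x \<in> \<Omega>"
    proof (rule ennreal_le_epsilon)
      fix e :: real assume e: "0 < e"
      obtain k where k: "F x - e \<le> ?F k x"
        using truncated_inf_convolution_approx[OF ne F0 FM lsc x e] by blast
      have "ennreal (F x) \<le> ennreal (?F k x) + ennreal e"
        using k e truncated_inf_convolution_nonneg[where F = F and k = "real k" and x = x, OF ne F0 M]
        by (simp flip: ennreal_plus)
      also have "\<dots> \<le> (SUP k. ennreal (?F k x)) + ennreal e"
        by (intro add_right_mono SUP_upper) simp
      finally show "ennreal (F x) \<le> (SUP k. ennreal (?F k x)) + ennreal e" .
    qed
    then show "ennreal (F x) * indicator \<Omega> x \<le> (SUP k. ennreal (?F k x) * indicator \<Omega> x)"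
      by (cases "x \<in> \<Omega>") auto
  qed
  also have "\<dots> = (SUP k. \<integral>\<^sup>+ x\<in>\<Omega>. ennreal (?F k x) \<partial>\<nu>)"
  proof (rule nn_integral_monotone_convergence_SUP)
    show "incseq (\<lambda>k x. ennreal (?F k x) * indicator \<Omega> x)"
      using truncated_inf_convolution_mono[where F = F, OF ne F0 M]
      by (intro incseq_SucI le_funI mult_right_mono ennreal_leI) auto
    show "(\<lambda>x. ennreal (?F k x) * indicator \<Omega> x) \<in> borel_measurable \<nu>" for k
      using borel_measurable_P2[OF \<nu> borel_measurable_continuous_onI[OF
          continuous_on_truncated_inf_convolution[where F = F and k = "real k", OF ne F0 M]]] P2_D(3)[OF \<nu>]
      by measurable
  qed
  finally show ?thesis .
qed

lemma narrow_conv_integral_le_liminf: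
  fixes \<phi> :: "'a::euclidean_space \<Rightarrow> real"
  assumes \<nu>s: "\<And>n. \<nu>s n \<in> P2 \<Omega>" and conv: "narrow_conv \<nu>s \<nu>"
    and \<phi>: "continuous_on UNIV \<phi>" "\<And>x. 0 \<le> \<phi> x" "\<And>x. \<phi> x \<le> B"
    and G: "\<forall>\<^sub>F n in sequentially. \<forall>x\<in>\<Omega>. \<phi> x \<le> G n x"
  shows "ennreal (\<integral>x. \<phi> x \<partial>\<nu>) \<le> liminf (\<lambda>n. \<integral>\<^sup>+ x\<in>\<Omega>. ennreal (G n x) \<partial>\<nu>s n)"
proof -
  have "bounded (range \<phi>)"
    unfolding bounded_iff using \<phi>(2,3) by (intro exI[of _ B]) auto
  then have "(\<lambda>n. \<integral>x. \<phi> x \<partial>\<nu>s n) \<longlonglongrightarrow> (\<integral>x. \<phi> x \<partial>\<nu>)"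
    using conv \<phi>(1) unfolding narrow_conv_def by blast
  then have "ennreal (\<integral>x. \<phi> x \<partial>\<nu>) = liminf (\<lambda>n. ennreal (\<integral>x. \<phi> x \<partial>\<nu>s n))"
    by (intro lim_imp_Liminf[symmetric] tendsto_ennrealI) auto
  also have "\<dots> \<le> liminf (\<lambda>n. \<integral>\<^sup>+ x\<in>\<Omega>. ennreal (G n x) \<partial>\<nu>s n)"
  proof (intro Liminf_mono)
    show "\<forall>\<^sub>F n in sequentially. ennreal (\<integral>x. \<phi> x \<partial>\<nu>s n) \<le> (\<integral>\<^sup>+ x\<in>\<Omega>. ennreal (G n x) \<partial>\<nu>s n)"
      using G
    proof eventually_elim
      case (elim n)
      have "ennreal (\<integral>x. \<phi> x \<partial>\<nu>s n) = (\<integral>\<^sup>+ x\<in>\<Omega>. ennreal (\<phi> x) \<partial>\<nu>s n)"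
        using set_nn_integral_P2_eq_integral[OF \<nu>s borel_measurable_continuous_onI[OF \<phi>(1)] \<phi>(2,3)] by simp
      also have "\<dots> \<le> (\<integral>\<^sup>+ x\<in>\<Omega>. ennreal (G n x) \<partial>\<nu>s n)"
        using elim by (intro nn_integral_mono) (auto simp: indicator_def intro: ennreal_leI)
      finally show ?case .
    qed
  qed
  finally show ?thesis .
qed

lemma set_nn_integral_continuous_le_liminf_narrow:
  fixes H :: "'a::euclidean_space \<Rightarrow> real" and G :: "nat \<Rightarrow> 'a \<Rightarrow> real"
  assumes \<nu>s: "\<And>n. \<nu>s n \<in> P2 \<Omega>" and \<nu>: "\<nu> \<in> P2 \<Omega>" and conv: "narrow_conv \<nu>s \<nu>"
    and H: "continuous_on UNIV H" "\<And>x. 0 \<le> H x" "\<And>x. H x \<le> M"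
    and G0: "\<And>n x. x \<in> \<Omega> \<Longrightarrow> 0 \<le> G n x"
    and G: "\<And>e. e > 0 \<Longrightarrow> \<forall>\<^sub>F n in sequentially. \<forall>x\<in>\<Omega>. H x - e \<le> G n x"
  shows "(\<integral>\<^sup>+ x\<in>\<Omega>. ennreal (H x) \<partial>\<nu>) \<le> liminf (\<lambda>n. \<integral>\<^sup>+ x\<in>\<Omega>. ennreal (G n x) \<partial>\<nu>s n)"
    (is "_ \<le> ?L")
proof (rule ennreal_le_epsilon)
  fix e :: real assume e: "0 < e"
  define \<phi> where "\<phi> x = max 0 (H x - e)" for x
  have "\<phi> x \<le> M" for x using H(2,3)[of x] e by (simp add: \<phi>_def)
  then have \<phi>: "continuous_on UNIV \<phi>" "\<And>x. 0 \<le> \<phi> x" "\<And>x. \<phi> x \<le> M"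
    unfolding \<phi>_def by (auto intro!: continuous_intros H(1))
  have lim: "ennreal (\<integral>x. \<phi> x \<partial>\<nu>) \<le> ?L"
  proof (rule narrow_conv_integral_le_liminf[OF \<nu>s conv \<phi>])
    show "\<forall>\<^sub>F n in sequentially. \<forall>x\<in>\<Omega>. \<phi> x \<le> G n x"
      using G[OF e] by eventually_elim (auto simp: \<phi>_def G0)
  qed
  have "(\<integral>\<^sup>+ x\<in>\<Omega>. ennreal (H x) \<partial>\<nu>) \<le> (\<integral>\<^sup>+ x. ennreal (\<phi> x) * indicator \<Omega> x + ennreal e \<partial>\<nu>)"
  proof (intro nn_integral_mono)
    fix x
    have "ennreal (H x) \<le> ennreal (\<phi> x + e)" by (intro ennreal_leI) (simp add: \<phi>_def)
    also have "\<dots> = ennreal (\<phi> x) + ennreal e" using \<phi>(2) e by (simp add: ennreal_plus)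
    finally have "ennreal (H x) \<le> ennreal (\<phi> x) + ennreal e" .
    then show "ennreal (H x) * indicator \<Omega> x \<le> ennreal (\<phi> x) * indicator \<Omega> x + ennreal e"
      by (cases "x \<in> \<Omega>") auto
  qed
  also have "\<dots> = (\<integral>\<^sup>+ x\<in>\<Omega>. ennreal (\<phi> x) \<partial>\<nu>) + (\<integral>\<^sup>+ x. ennreal e \<partial>\<nu>)"
  proof (rule nn_integral_add)
    have [measurable]: "\<phi> \<in> borel_measurable \<nu>" "\<Omega> \<in> sets \<nu>"
      using borel_measurable_P2[OF \<nu> borel_measurable_continuous_onI[OF \<phi>(1)]] P2_D(3)[OF \<nu>] .
    show "(\<lambda>x. ennreal (\<phi> x) * indicator \<Omega> x) \<in> borel_measurable \<nu>" by measurable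
  qed simp
  also have "\<dots> = ennreal (\<integral>x. \<phi> x \<partial>\<nu>) + ennreal e"
    using set_nn_integral_P2_eq_integral[OF \<nu> borel_measurable_continuous_onI[OF \<phi>(1)] \<phi>(2,3)]
      prob_space.emeasure_space_1[OF P2_D(1)[OF \<nu>]]
    by simp
  also have "\<dots> \<le> ?L + ennreal e" using lim by (rule add_right_mono)
  finally show "(\<integral>\<^sup>+ x\<in>\<Omega>. ennreal (H x) \<partial>\<nu>) \<le> ?L + ennreal e" .
qed

lemma set_nn_integral_le_liminf_narrow:
  fixes F :: "'a::euclidean_space \<Rightarrow> real" and G :: "nat \<Rightarrow> 'a \<Rightarrow> real"
  assumes \<nu>s: "\<And>n. \<nu>s n \<in> P2 \<Omega>" and \<nu>: "\<nu> \<in> P2 \<Omega>" and conv: "narrow_conv \<nu>s \<nu>"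
    and F0: "\<And>x. x \<in> \<Omega> \<Longrightarrow> 0 \<le> F x" and FM: "\<And>x. x \<in> \<Omega> \<Longrightarrow> F x \<le> M"
    and lsc: "\<And>x e. x \<in> \<Omega> \<Longrightarrow> e > 0 \<Longrightarrow> \<exists>\<delta>>0. \<forall>y\<in>\<Omega>. dist y x < \<delta> \<longrightarrow> F x - e \<le> F y"
    and G0: "\<And>n x. x \<in> \<Omega> \<Longrightarrow> 0 \<le> G n x"
    and G: "\<And>e. e > 0 \<Longrightarrow> \<forall>\<^sub>F n in sequentially. \<forall>x\<in>\<Omega>. F x - e \<le> G n x"
  shows "(\<integral>\<^sup>+ x\<in>\<Omega>. ennreal (F x) \<partial>\<nu>) \<le> liminf (\<lambda>n. \<integral>\<^sup>+ x\<in>\<Omega>. ennreal (G n x) \<partial>\<nu>s n)"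
proof -
  let ?F = "\<lambda>k::nat. truncated_inf_convolution F \<Omega> M (real k)"
  have ne: "\<Omega> \<noteq> {}" by (rule P2_D(5)[OF \<nu>])
  then obtain x0 where "x0 \<in> \<Omega>" by blast
  then have M: "0 \<le> M" using F0 FM by force
  have "(\<integral>\<^sup>+ x\<in>\<Omega>. ennreal (?F k x) \<partial>\<nu>) \<le> liminf (\<lambda>n. \<integral>\<^sup>+ x\<in>\<Omega>. ennreal (G n x) \<partial>\<nu>s n)" for k
  proof (rule set_nn_integral_continuous_le_liminf_narrow[OF \<nu>s \<nu> conv _ _ _ G0])
    show "continuous_on UNIV (?F k)" "0 \<le> ?F k x" "?F k x \<le> M" for x
      using truncated_inf_convolution_properties[where F = F and k = "real k", OF ne F0 M] by auto
    show "\<forall>\<^sub>F n in sequentially. \<forall>x\<in>\<Omega>. ?F k x - e \<le> G n x" if "e > 0" for e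
      using G[OF that] by eventually_elim
        (use truncated_inf_convolution_le[where F = F and k = "real k", OF ne F0 M] in force)
  qed
  then have "(SUP k::nat. \<integral>\<^sup>+ x\<in>\<Omega>. ennreal (?F k x) \<partial>\<nu>) \<le> liminf (\<lambda>n. \<integral>\<^sup>+ x\<in>\<Omega>. ennreal (G n x) \<partial>\<nu>s n)"
    by (simp add: SUP_least)
  with set_nn_integral_le_SUP_truncated_inf_convolution[OF \<nu> F0 FM lsc] show ?thesis
    by (rule order_trans)
qed

section \<open>Uniform convergence of the velocity fields\<close>

lemma uniform_limit_equicontinuous:
  fixes f :: "nat \<Rightarrow> 'a::metric_space \<Rightarrow> 'b::metric_space"
  assumes S: "compact S"
    and equi: "\<And>e. e > 0 \<Longrightarrow> \<exists>d>0. \<forall>x\<in>S. \<forall>x'\<in>S. dist x x' < d \<longrightarrow>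
      (\<forall>n. dist (f n x) (f n x') \<le> e) \<and> dist (g x) (g x') \<le> e"
    and lim: "\<And>x. x \<in> S \<Longrightarrow> (\<lambda>n. f n x) \<longlonglongrightarrow> g x"
  shows "uniform_limit S f g sequentially"
  unfolding uniform_limit_iff
proof (intro allI impI)
  fix e :: real assume "e > 0"
  then obtain d where "d > 0" and d: "\<And>x x'. x \<in> S \<Longrightarrow> x' \<in> S \<Longrightarrow> dist x x' < d \<Longrightarrow>
      (\<forall>n. dist (f n x) (f n x') \<le> e / 3) \<and> dist (g x) (g x') \<le> e / 3"
    using equi[of "e / 3"] by auto
  obtain C where C: "C \<subseteq> S" "finite C" "S \<subseteq> (\<Union>c\<in>C. ball c d)"
    using compactE_image[where C = S and f = "\<lambda>c. ball c d", OF S] \<open>d > 0\<close> by force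
  have "\<forall>\<^sub>F n in sequentially. \<forall>c\<in>C. dist (f n c) (g c) < e / 3"
    using C \<open>e > 0\<close> lim by (intro eventually_ball_finite ballI tendstoD) auto
  then show "\<forall>\<^sub>F n in sequentially. \<forall>x\<in>S. dist (f n x) (g x) < e"
  proof eventually_elim
    case (elim n)
    show ?case
    proof
      fix x assume x: "x \<in> S"
      then obtain c where c: "c \<in> C" "dist x c < d" using C(3) by (auto simp: dist_commute)
      have "dist (f n x) (g x) \<le> dist (f n x) (f n c) + dist (f n c) (g c) + dist (g c) (g x)"
        by (metis dist_triangle add_right_mono order_trans)
      moreover have "dist (f n x) (f n c) \<le> e / 3" and "dist (g c) (g x) \<le> e / 3"
        using d[OF x _ c(2)] c(1) C(1) by (auto simp: dist_commute)
      moreover have "dist (f n c) (g c) < e / 3" using elim c(1) by blast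
      ultimately show "dist (f n x) (g x) < e" by linarith
    qed
  qed
qed

lemma set_integral_convolution_equicontinuous:
  fixes g :: "'a::euclidean_space \<Rightarrow> 'b::euclidean_space"
  assumes \<Omega>: "compact \<Omega>" and g: "continuous_on UNIV g" and e: "e > 0"
  shows "\<exists>d>0. \<forall>\<mu>\<in>P2 \<Omega>. \<forall>x\<in>\<Omega>. \<forall>x'\<in>\<Omega>. dist x x' < d \<longrightarrow>
    dist (LINT y:\<Omega>|\<mu>. g (x - y)) (LINT y:\<Omega>|\<mu>. g (x' - y)) \<le> e"
proof -
  define D where "D = {x - y | x y. x \<in> \<Omega> \<and> y \<in> \<Omega>}"
  have D: "compact D" using compact_differences[OF \<Omega> \<Omega>] by (simp add: D_def)
  have gD: "continuous_on D g" by (rule continuous_on_subset[OF g subset_UNIV])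
  obtain d where "d > 0" and d: "\<And>z z'. z \<in> D \<Longrightarrow> z' \<in> D \<Longrightarrow> dist z' z < d \<Longrightarrow> dist (g z') (g z) < e"
    using compact_uniformly_continuous[OF gD D] e by (rule uniformly_continuous_onE) blast
  have gx: "continuous_on UNIV (\<lambda>y. g (x - y))" for x
    by (intro continuous_on_compose2[OF g] continuous_intros) auto
  obtain B where "\<And>w. w \<in> g ` D \<Longrightarrow> norm w \<le> B"
    using compact_imp_bounded[OF compact_continuous_image[OF gD D]] by (rule bounded_normE) blast
  then have B: "\<And>z. z \<in> D \<Longrightarrow> norm (g z) \<le> B" by blast
  have "dist (LINT y:\<Omega>|\<mu>. g (x - y)) (LINT y:\<Omega>|\<mu>. g (x' - y)) \<le> e"
    if \<mu>: "\<mu> \<in> P2 \<Omega>" and x: "x \<in> \<Omega>" and x': "x' \<in> \<Omega>" and xx': "dist x x' < d" for \<mu> x x'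
  proof -
    have int: "set_integrable \<mu> \<Omega> (\<lambda>y. g (z - y))" if "z \<in> \<Omega>" for z
      using that by (intro set_integrable_P2_bounded(1)[OF \<mu> borel_measurable_continuous_onI[OF gx] B])
        (auto simp: D_def)
    have "(LINT y:\<Omega>|\<mu>. g (x - y)) - (LINT y:\<Omega>|\<mu>. g (x' - y)) = (LINT y:\<Omega>|\<mu>. g (x - y) - g (x' - y))"
      by (rule set_integral_diff(2)[OF int[OF x] int[OF x'], symmetric])
    also have "norm \<dots> \<le> e"
    proof (rule set_integrable_P2_bounded(2)[OF \<mu>])
      show "(\<lambda>y. g (x - y) - g (x' - y)) \<in> borel_measurable borel"
        by (intro borel_measurable_diff borel_measurable_continuous_onI gx)
      fix y assume "y \<in> \<Omega>"
      then have "dist (g (x - y)) (g (x' - y)) < e"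
        using d[of "x' - y" "x - y"] x x' xx' by (auto simp: D_def dist_norm)
      then show "norm (g (x - y) - g (x' - y)) \<le> e" by (simp add: dist_norm)
    qed
    finally show ?thesis by (simp add: dist_norm)
  qed
  then show ?thesis using \<open>d > 0\<close> by blast
qed

lemma continuous_on_set_integral_convolution:
  fixes g :: "'a::euclidean_space \<Rightarrow> 'b::euclidean_space"
  assumes "compact \<Omega>" and "continuous_on UNIV g" and \<mu>: "\<mu> \<in> P2 \<Omega>"
  shows "continuous_on \<Omega> (\<lambda>x. LINT y:\<Omega>|\<mu>. g (x - y))"
  unfolding continuous_on_iff
proof (intro ballI allI impI)
  fix x and e :: real assume "x \<in> \<Omega>" and "e > 0"
  then obtain d where "d > 0" and d: "\<And>\<mu> x' x. \<mu> \<in> P2 \<Omega> \<Longrightarrow> x' \<in> \<Omega> \<Longrightarrow> x \<in> \<Omega> \<Longrightarrow> dist x' x < d \<Longrightarrow>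
      dist (LINT y:\<Omega>|\<mu>. g (x' - y)) (LINT y:\<Omega>|\<mu>. g (x - y)) \<le> e / 2"
    using set_integral_convolution_equicontinuous[OF assms(1,2), of "e / 2"] by auto
  show "\<exists>d>0. \<forall>x'\<in>\<Omega>. dist x' x < d \<longrightarrow>
      dist (LINT y:\<Omega>|\<mu>. g (x' - y)) (LINT y:\<Omega>|\<mu>. g (x - y)) < e"
  proof (intro exI[of _ d] conjI ballI impI \<open>d > 0\<close>)
    fix x' assume "x' \<in> \<Omega>" and "dist x' x < d"
    then show "dist (LINT y:\<Omega>|\<mu>. g (x' - y)) (LINT y:\<Omega>|\<mu>. g (x - y)) < e"
      using d[OF \<mu> _ \<open>x \<in> \<Omega>\<close>] \<open>e > 0\<close> by fastforce
  qed
qed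

lemma uniform_limit_set_integral_convolution:
  fixes g :: "'a::euclidean_space \<Rightarrow> 'b::euclidean_space"
  assumes \<Omega>: "compact \<Omega>" and g: "continuous_on UNIV g"
    and \<nu>s: "\<And>n. \<nu>s n \<in> P2 \<Omega>" and \<nu>: "\<nu> \<in> P2 \<Omega>" and conv: "narrow_conv \<nu>s \<nu>"
  shows "uniform_limit \<Omega> (\<lambda>n x. LINT y:\<Omega>|\<nu>s n. g (x - y)) (\<lambda>x. LINT y:\<Omega>|\<nu>. g (x - y)) sequentially"
proof (rule uniform_limit_equicontinuous[OF \<Omega>])
  show "\<exists>d>0. \<forall>x\<in>\<Omega>. \<forall>x'\<in>\<Omega>. dist x x' < d \<longrightarrow>
      (\<forall>n. dist (LINT y:\<Omega>|\<nu>s n. g (x - y)) (LINT y:\<Omega>|\<nu>s n. g (x' - y)) \<le> e) \<and>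
      dist (LINT y:\<Omega>|\<nu>. g (x - y)) (LINT y:\<Omega>|\<nu>. g (x' - y)) \<le> e" if e: "e > 0" for e
  proof -
    obtain d where "d > 0" and d: "\<And>\<mu> x x'. \<mu> \<in> P2 \<Omega> \<Longrightarrow> x \<in> \<Omega> \<Longrightarrow> x' \<in> \<Omega> \<Longrightarrow> dist x x' < d \<Longrightarrow>
        dist (LINT y:\<Omega>|\<mu>. g (x - y)) (LINT y:\<Omega>|\<mu>. g (x' - y)) \<le> e"
      using set_integral_convolution_equicontinuous[OF \<Omega> g e] by blast
    then show ?thesis using \<nu>s \<nu> by blast
  qed
  fix x assume "x \<in> \<Omega>"
  have "compact (g ` {x - y | x y. x \<in> \<Omega> \<and> y \<in> \<Omega>})"
    by (intro compact_continuous_image compact_differences \<Omega> continuous_on_subset[OF g subset_UNIV])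
  then obtain B where "\<And>w. w \<in> g ` {x - y | x y. x \<in> \<Omega> \<and> y \<in> \<Omega>} \<Longrightarrow> norm w \<le> B"
    by (rule bounded_normE[OF compact_imp_bounded]) blast
  then show "(\<lambda>n. LINT y:\<Omega>|\<nu>s n. g (x - y)) \<longlonglongrightarrow> (LINT y:\<Omega>|\<nu>. g (x - y))"
    using \<open>x \<in> \<Omega>\<close> by (intro narrow_conv_set_integral[OF \<nu>s \<nu> conv] continuous_on_compose2[OF g]
        continuous_intros) auto
qed

section \<open>The tangential energy\<close>

lemma power2_uniform_approxE:
  fixes M e :: real
  assumes "0 \<le> M" and "e > 0"
  obtains d where "d > 0" and "\<And>a b. 0 \<le> a \<Longrightarrow> a \<le> M \<Longrightarrow> 0 \<le> b \<Longrightarrow> a \<le> b + d \<Longrightarrow> a\<^sup>2 \<le> b\<^sup>2 + e"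
proof
  show "e / (2 * M + 1) > 0" using assms by simp
  fix a b :: real assume a: "0 \<le> a" "a \<le> M" and b: "0 \<le> b" and ab: "a \<le> b + e / (2 * M + 1)"
  show "a\<^sup>2 \<le> b\<^sup>2 + e"
  proof (cases "a \<le> b")
    case True then show ?thesis using a assms by (simp add: power_mono add_increasing2)
  next
    case False
    have "a\<^sup>2 - b\<^sup>2 = (a - b) * (a + b)" by (simp add: power2_eq_square algebra_simps)
    also have "\<dots> \<le> e / (2 * M + 1) * (2 * M + 1)"
      using False a b ab by (intro mult_mono) auto
    also have "\<dots> = e" using assms by simp
    finally show ?thesis by simp
  qed
qed

lemma power2_lower_semicontinuous:
  fixes f :: "'a::metric_space \<Rightarrow> real"
  assumes f: "\<And>x. x \<in> \<Omega> \<Longrightarrow> 0 \<le> f x" "\<And>x. x \<in> \<Omega> \<Longrightarrow> f x \<le> M"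
    and lsc: "\<And>x e. x \<in> \<Omega> \<Longrightarrow> e > 0 \<Longrightarrow> \<exists>\<delta>>0. \<forall>y\<in>\<Omega>. dist y x < \<delta> \<longrightarrow> f x - e < f y"
    and x: "x \<in> \<Omega>" and e: "e > 0"
  shows "\<exists>\<delta>>0. \<forall>y\<in>\<Omega>. dist y x < \<delta> \<longrightarrow> (f x)\<^sup>2 - e \<le> (f y)\<^sup>2"
proof -
  have "0 \<le> M" using f x by force
  obtain d where "d > 0" and sq: "\<And>a b. 0 \<le> a \<Longrightarrow> a \<le> M \<Longrightarrow> 0 \<le> b \<Longrightarrow> a \<le> b + d \<Longrightarrow> a\<^sup>2 \<le> b\<^sup>2 + e"
    by (rule power2_uniform_approxE[OF \<open>0 \<le> M\<close> e]) blast
  obtain \<delta> where "\<delta> > 0" and \<delta>: "\<forall>y\<in>\<Omega>. dist y x < \<delta> \<longrightarrow> f x - d < f y"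
    using lsc[OF x \<open>d > 0\<close>] by blast
  show ?thesis
  proof (intro exI[of _ \<delta>] conjI ballI impI \<open>\<delta> > 0\<close>)
    fix y assume "y \<in> \<Omega>" and "dist y x < \<delta>"
    then have "f x \<le> f y + d" and "0 \<le> f y" using \<delta> f by force+
    then show "(f x)\<^sup>2 - e \<le> (f y)\<^sup>2" using sq[of "f x" "f y"] f x by simp
  qed
qed

lemma set_nn_integral_norm_tangent_proj_liminf:
  fixes \<Omega> :: "'a::euclidean_space set" and v :: "'a \<Rightarrow> 'a" and vs :: "nat \<Rightarrow> 'a \<Rightarrow> 'a"
  assumes \<Omega>: "compact \<Omega>" and eta: "\<eta> > 0" and pr: "prox_regular \<eta> \<Omega>"
    and \<nu>s: "\<And>n. \<nu>s n \<in> P2 \<Omega>" and \<nu>: "\<nu> \<in> P2 \<Omega>" and conv: "narrow_conv \<nu>s \<nu>"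
    and v: "continuous_on \<Omega> v" and vs: "uniform_limit \<Omega> vs v sequentially"
  shows "(\<integral>\<^sup>+ x\<in>\<Omega>. ennreal ((norm (tangent_proj \<Omega> x (v x)))\<^sup>2) \<partial>\<nu>)
    \<le> liminf (\<lambda>n. \<integral>\<^sup>+ x\<in>\<Omega>. ennreal ((norm (tangent_proj \<Omega> x (vs n x)))\<^sup>2) \<partial>\<nu>s n)"
proof -
  have cl: "closed \<Omega>" using \<Omega> by (rule compact_imp_closed)
  obtain M where "M > 0" and "\<And>w. w \<in> v ` \<Omega> \<Longrightarrow> norm w \<le> M"
    using compact_imp_bounded[OF compact_continuous_image[OF v \<Omega>]] by (rule bounded_normE) blast
  then have "0 \<le> M" and M: "\<And>x. x \<in> \<Omega> \<Longrightarrow> norm (v x) \<le> M" by auto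
  let ?f = "\<lambda>x. norm (tangent_proj \<Omega> x (v x))"
  have f: "0 \<le> ?f x" "?f x \<le> M" if "x \<in> \<Omega>" for x
    using norm_tangent_proj_le[OF cl eta pr that, of 0 "v x"] M[OF that]
    by (simp_all add: convex_cone_contains_0[OF convex_cone_eta_normal_cone[OF eta pr that]])
  show ?thesis
  proof (rule set_nn_integral_le_liminf_narrow[OF \<nu>s \<nu> conv, where M = "M\<^sup>2"])
    show "(?f x)\<^sup>2 \<le> M\<^sup>2" if "x \<in> \<Omega>" for x using f[OF that] by (simp add: power_mono)
    show "\<exists>\<delta>>0. \<forall>y\<in>\<Omega>. dist y x < \<delta> \<longrightarrow> (?f x)\<^sup>2 - e \<le> (?f y)\<^sup>2"
      if "x \<in> \<Omega>" and "e > 0" for x e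
      using f norm_tangent_proj_lower_semicontinuous[OF cl eta pr v] that
      by (rule power2_lower_semicontinuous)
    show "\<forall>\<^sub>F n in sequentially. \<forall>x\<in>\<Omega>. (?f x)\<^sup>2 - e \<le> (norm (tangent_proj \<Omega> x (vs n x)))\<^sup>2"
      if e: "e > 0" for e
    proof -
      obtain d where "d > 0" and sq: "\<And>a b. 0 \<le> a \<Longrightarrow> a \<le> M \<Longrightarrow> 0 \<le> b \<Longrightarrow> a \<le> b + d \<Longrightarrow> a\<^sup>2 \<le> b\<^sup>2 + e"
        by (rule power2_uniform_approxE[OF \<open>0 \<le> M\<close> e]) blast
      show ?thesis
        using uniform_limitD[OF vs \<open>d > 0\<close>]
      proof eventually_elim
        case (elim n)
        show ?case
        proof
          fix x assume x: "x \<in> \<Omega>"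
          have "?f x - norm (tangent_proj \<Omega> x (vs n x)) \<le> dist (tangent_proj \<Omega> x (v x)) (tangent_proj \<Omega> x (vs n x))"
            by (simp add: dist_norm norm_triangle_ineq2)
          also have "\<dots> \<le> dist (v x) (vs n x)" by (rule dist_tangent_proj_le[OF cl eta pr x])
          also have "\<dots> < d" using elim x by (simp add: dist_commute)
          finally show "(?f x)\<^sup>2 - e \<le> (norm (tangent_proj \<Omega> x (vs n x)))\<^sup>2"
            using sq[of "?f x" "norm (tangent_proj \<Omega> x (vs n x))"] f[OF x] by simp
        qed
      qed
    qed
  qed simp_all
qed

theorem lemma3p7:
  fixes \<Omega> :: "'a::euclidean_space set" and \<eta> lamW lamV :: real
    and W V :: "'a \<Rightarrow> real" and gW gV :: "'a \<Rightarrow> 'a"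
    and \<nu>s :: "nat \<Rightarrow> 'a measure" and \<nu> :: "'a measure"
  assumes "bounded \<Omega>" and "closed \<Omega>" and "\<eta> > 0" and "prox_regular \<eta> \<Omega>"
    and "C1_with_gradient W gW"
    and "geod_convex_on lamW (convex hull {x - y | x y. x \<in> \<Omega> \<and> y \<in> \<Omega>}) W gW"
    and "C1_with_gradient V gV"
    and "geod_convex_on lamV (convex hull \<Omega>) V gV"
    and "\<forall>n. \<nu>s n \<in> P2 \<Omega>" and "\<nu> \<in> P2 \<Omega>"
    and "narrow_conv \<nu>s \<nu>"
    and "(SUP n. \<integral>\<^sup>+ x\<in>\<Omega>. ennreal ((norm x)\<^sup>2) \<partial>(\<nu>s n)) < \<infinity>"
  shows "(\<integral>\<^sup>+ x\<in>\<Omega>. ennreal ((norm (tangent_proj \<Omega> x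
              (- (LINT y:\<Omega>|\<nu>. gW (x - y)) - gV x)))\<^sup>2) \<partial>\<nu>)
         \<le> liminf (\<lambda>n. \<integral>\<^sup>+ x\<in>\<Omega>. ennreal ((norm (tangent_proj \<Omega> x
              (- (LINT y:\<Omega>|\<nu>s n. gW (x - y)) - gV x)))\<^sup>2) \<partial>(\<nu>s n))"
proof (rule set_nn_integral_norm_tangent_proj_liminf)
  show \<Omega>: "compact \<Omega>" using assms(1,2) by (simp add: compact_eq_bounded_closed)
  have gW: "continuous_on UNIV gW" and gV: "continuous_on UNIV gV"
    using assms(5,7) by (simp_all add: C1_with_gradient_def)
  show "continuous_on \<Omega> (\<lambda>x. - (LINT y:\<Omega>|\<nu>. gW (x - y)) - gV x)"
    by (intro continuous_intros continuous_on_set_integral_convolution[OF \<Omega> gW assms(10)]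
        continuous_on_subset[OF gV]) simp
  show "uniform_limit \<Omega> (\<lambda>n x. - (LINT y:\<Omega>|\<nu>s n. gW (x - y)) - gV x)
      (\<lambda>x. - (LINT y:\<Omega>|\<nu>. gW (x - y)) - gV x) sequentially"
    using assms(9-11)
    by (intro uniform_limit_intros uniform_limit_set_integral_convolution[OF \<Omega> gW]) auto
qed (use assms(3,4,9-11) in simp_all)

end
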